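(* Let $\alpha>0$, $\nu:=\nu(\alpha)$, and let $(a_n)_{n\ge1}$ be a sequence of positive reals. Define $(\chi_t)_{t\ge1}$ inductively by $$\chi_t:=\max\Big\{a_t,\ \tfrac{t-1}{\alpha}\chi_1,\ \tfrac{t-2}{\alpha}\chi_2,\ \dots,\ \tfrac1\alpha\chi_{t-1}\Big\}$$ (so $\chi_1=a_1$). If $\lim_{n\to\infty}a_ne^{-\nu n}=0$, then there are constants $0<c'\le c<\infty$ such that $c'e^{\nu t}\le\chi_t\le ce^{\nu t}$ for all $t\ge1$; consequently $\lim_{t\to\infty}\frac{\log\chi_t}{t}=\nu$.
   Context: For $\alpha>0$, let $T=T(\alpha)\in\mathbb N$ be the unique positive integer with $\frac{(T-1)^T}{T^{T-1}}<\alpha\le\frac{T^{T+1}}{(T+1)^T}$, and define $\nu(\alpha):=\frac1T\log\frac T\alpha$. *)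

theory Defs
  imports "HOL-Analysis.Analysis"
begin

definition T_of :: "real \<Rightarrow> nat" where
  "T_of \<alpha> = (THE T::nat. T \<ge> 1 \<and>
      real (T - 1) ^ T / real T ^ (T - 1) < \<alpha> \<and>
      \<alpha> \<le> real T ^ (T + 1) / real (T + 1) ^ T)"

definition nu :: "real \<Rightarrow> real" where
  "nu \<alpha> = (1 / real (T_of \<alpha>)) * ln (real (T_of \<alpha>) / \<alpha>)"

function chi :: "(nat \<Rightarrow> real) \<Rightarrow> real \<Rightarrow> nat \<Rightarrow> real" where
  "chi a \<alpha> t = (if t \<le> 1 then a t
     else max (a t) (Max ((\<lambda>k. real (t - k) / \<alpha> * chi a \<alpha> k) ` {1..<t})))"
  by auto
termination by (relation "Wellfounded.measure (\<lambda>(a, \<alpha>, t). t)") auto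

end

theory Submission
  imports Defs
begin

text \<open>With \<open>x = exp \<nu>\<close>, the choice of \<open>\<nu>\<close> gives \<open>\<alpha> x\<^sup>T = T\<close>, and the two inequalities defining
  \<open>T\<close> say exactly that \<open>m x\<^sup>-\<^sup>m\<close> is maximal at \<open>m = T\<close>. Hence \<open>m / \<alpha> \<le> exp (\<nu> m)\<close> for all
  \<open>m \<ge> 1\<close>, with equality at \<open>m = T\<close>. The first fact makes \<open>c exp (\<nu> t)\<close> a supersolution of the
  recursion as soon as it dominates \<open>a\<close>, which it does for large \<open>c\<close> because \<open>a\<^sub>n exp (-\<nu> n)\<close> is
  bounded; the second gives \<open>\<chi>\<^sub>t \<ge> exp (\<nu> T) \<chi>\<^sub>t\<^sub>-\<^sub>T\<close>, so a lower bound on \<open>{1..T}\<close> propagates.\<close>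

definition threshold :: "nat \<Rightarrow> real" where
  "threshold n = real n ^ Suc n / real (Suc n) ^ n"

lemma threshold_less_Suc: "threshold n < threshold (Suc n)"
proof -
  have "(real n * real (n + 2)) ^ Suc n < (real (Suc n) ^ 2) ^ Suc n"
    by (rule power_strict_mono) (auto simp: power2_eq_square algebra_simps)
  then have "real n ^ Suc n * real (n + 2) ^ Suc n < real (Suc n) ^ Suc (Suc n) * real (Suc n) ^ n"
    by (simp only: power_mult_distrib power_mult[symmetric] power_add[symmetric]) (simp add: mult_2)
  then show ?thesis
    unfolding threshold_def by (simp add: divide_simps)
qed

lemma strict_mono_threshold: "strict_mono threshold"
  by (rule strict_monoI_Suc) (rule threshold_less_Suc)

lemma threshold_lower_bound: "real n / exp 1 \<le> threshold n"
proof (cases "n = 0")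
  case False
  have "(1 + 1 / real n) ^ n \<le> exp 1"
    using exp_ge_one_plus_x_over_n_power_n[where x=1 and n=n] False by simp
  also have "(1 + 1 / real n) ^ n = real (Suc n) ^ n / real n ^ n"
    using False by (simp add: field_simps power_divide)
  finally have "real (Suc n) ^ n \<le> exp 1 * real n ^ n"
    using False by (simp add: divide_le_eq)
  then show ?thesis
    unfolding threshold_def using False
    by (simp add: divide_simps mult.commute mult_left_mono)
qed (simp add: threshold_def)

lemma strict_mono_ex1_bracket:
  fixes f :: "nat \<Rightarrow> 'a::linorder"
  assumes "strict_mono f" "f 0 < y" "y \<le> f N"
  shows "\<exists>!n. f n < y \<and> y \<le> f (Suc n)"
proof -
  define M where "M = (LEAST n. y \<le> f n)"
  have "y \<le> f M" unfolding M_def by (rule LeastI[of _ N]) fact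
  moreover have "M \<noteq> 0" using \<open>y \<le> f M\<close> assms(2) by (metis leD)
  then obtain n where n: "M = Suc n" using not0_implies_Suc by blast
  moreover have "f n < y" using not_less_Least[of n "\<lambda>n. y \<le> f n"] n M_def by auto
  ultimately have ex: "f n < y \<and> y \<le> f (Suc n)" by simp
  have "m = n" if "f m < y \<and> y \<le> f (Suc m)" for m
    using that ex strict_mono_less_eq[OF assms(1)]
    by (metis Suc_leI leD linorder_neqE_nat order.strict_trans2)
  with ex show ?thesis by blast
qed

lemma T_of_threshold:
  assumes "\<alpha> > 0"
  shows "T_of \<alpha> \<ge> 1" "threshold (T_of \<alpha> - 1) < \<alpha>" "\<alpha> \<le> threshold (T_of \<alpha>)"
proof -
  obtain N :: nat where "\<alpha> * exp 1 \<le> real N" using real_arch_simple by blast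
  then have "\<alpha> \<le> real N / exp 1"
    by (simp add: field_simps)
  then have "\<alpha> \<le> threshold N"
    using threshold_lower_bound[of N] by linarith
  then have "\<exists>!S. threshold S < \<alpha> \<and> \<alpha> \<le> threshold (Suc S)"
    using strict_mono_ex1_bracket[OF strict_mono_threshold] assms
    by (simp add: threshold_def)
  then obtain S where S: "threshold S < \<alpha>" "\<alpha> \<le> threshold (Suc S)"
    and S_unique: "\<And>S'. threshold S' < \<alpha> \<Longrightarrow> \<alpha> \<le> threshold (Suc S') \<Longrightarrow> S' = S"
    by blast
  have "T \<ge> 1 \<and> real (T - 1) ^ T / real T ^ (T - 1) < \<alpha> \<and>
      \<alpha> \<le> real T ^ (T + 1) / real (T + 1) ^ T \<longleftrightarrow> T = Suc S" for T
  proof (cases T)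
    case (Suc m)
    then have "real (T - 1) ^ T / real T ^ (T - 1) = threshold m"
      and "real T ^ (T + 1) / real (T + 1) ^ T = threshold (Suc m)"
      by (simp_all add: threshold_def)
    then show ?thesis
      using Suc S S_unique[of m] by auto
  qed simp
  then have "T_of \<alpha> = Suc S"
    unfolding T_of_def by simp
  then show "T_of \<alpha> \<ge> 1" "threshold (T_of \<alpha> - 1) < \<alpha>" "\<alpha> \<le> threshold (T_of \<alpha>)"
    using S by simp_all
qed

text \<open>The ratio of consecutive terms of \<open>m x\<^sup>-\<^sup>m\<close> is \<open>(m + 1) / (m x)\<close>; the hypotheses make it
  at least \<open>1\<close> for \<open>m < T\<close> and at most \<open>1\<close> for \<open>m \<ge> T\<close>.\<close>

lemma mult_power_le_at_peak:
  fixes x :: real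
  assumes "x > 0" "T \<ge> 1" "real T + 1 \<le> real T * x" "(real T - 1) * x \<le> real T" "m \<ge> 1"
  shows "real m * x ^ T \<le> real T * x ^ m"
proof (cases "T \<le> m")
  case True
  then show ?thesis
  proof (induction m rule: dec_induct)
    case (step n)
    have "real T * (real n + 1) \<le> real n * (real T + 1)"
      using step.hyps(1) by (simp add: algebra_simps)
    also have "\<dots> \<le> real T * (real n * x)"
      using mult_left_mono[OF assms(3), of "real n"] by (simp add: algebra_simps)
    finally have "real n + 1 \<le> real n * x"
      using assms(2) by simp
    from mult_right_mono[OF this, of "x ^ T"]
    have "real (Suc n) * x ^ T \<le> real n * x ^ T * x"
      using assms(1) by (simp add: algebra_simps)
    also have "\<dots> \<le> real T * x ^ n * x"
      using step.IH assms(1) by (simp add: mult_right_mono)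
    finally show ?case by (simp add: algebra_simps)
  qed simp
next
  case False
  then have "m \<le> T" by simp
  then show ?thesis
  proof (induction m rule: inc_induct)
    case (step n)
    have "(real T - 1) * (real n * x) \<le> real n * real T"
      using mult_left_mono[OF assms(4), of "real n"] by (simp add: algebra_simps)
    also have "\<dots> \<le> (real T - 1) * (real n + 1)"
      using step.hyps(2) by (simp add: algebra_simps)
    finally have "(real T - 1) * (real n * x) \<le> (real T - 1) * (real n + 1)" .
    moreover have "real T - 1 > 0"
      using step.hyps assms(5) by simp
    ultimately have "real n * x \<le> real n + 1"
      by simp
    from mult_right_mono[OF this, of "x ^ T"]
    have "real n * x ^ T * x \<le> real (Suc n) * x ^ T"
      using assms(1) by (simp add: algebra_simps)
    also have "\<dots> \<le> real T * x ^ n * x"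
      using step.IH by (simp add: algebra_simps)
    finally show ?case
      using assms(1) by simp
  qed simp
qed

lemma exp_nu_T_of:
  assumes "\<alpha> > 0"
  shows "\<alpha> * exp (nu \<alpha> * real (T_of \<alpha>)) = real (T_of \<alpha>)"
proof -
  have "real (T_of \<alpha>) > 0"
    using T_of_threshold(1)[OF assms] by simp
  then show ?thesis
    using assms unfolding nu_def by simp
qed

lemma le_exp_nu:
  assumes "\<alpha> > 0" "m \<ge> 1"
  shows "real m \<le> \<alpha> * exp (nu \<alpha> * real m)"
proof -
  define T where "T = T_of \<alpha>"
  define x where "x = exp (nu \<alpha>)"
  have x_power: "exp (nu \<alpha> * real n) = x ^ n" for n
    unfolding x_def exp_of_nat_mult[symmetric] by (simp add: mult.commute)
  have T: "T \<ge> 1"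
    using T_of_threshold(1)[OF assms(1)] by (simp add: T_def)
  have x: "x > 0"
    by (simp add: x_def)
  have xT: "\<alpha> * x ^ T = real T"
    using exp_nu_T_of[OF assms(1)] by (simp add: T_def x_power)
  have "real T * real (Suc T) ^ T = \<alpha> * real (Suc T) ^ T * x ^ T"
    using xT by (simp add: algebra_simps)
  also have "\<dots> \<le> real T ^ Suc T * x ^ T"
    using T_of_threshold(3)[OF assms(1)] x
    by (simp add: T_def threshold_def pos_le_divide_eq mult_right_mono)
  finally have "real (Suc T) ^ T \<le> (real T * x) ^ T"
    using T by (simp add: power_mult_distrib)
  then have up: "real T + 1 \<le> real T * x"
    using T x by simp
  have "threshold (T - 1) = real (T - 1) ^ T / real T ^ (T - 1)"
    using T by (simp add: threshold_def)
  then have "real (T - 1) ^ T < \<alpha> * real T ^ (T - 1)"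
    using T_of_threshold(2)[OF assms(1)] T by (simp add: T_def pos_divide_less_eq)
  then have "(real (T - 1) * x) ^ T < \<alpha> * real T ^ (T - 1) * x ^ T"
    using x by (simp add: power_mult_distrib)
  also have "\<dots> = real T ^ T"
    using xT T by (simp add: power_eq_if algebra_simps)
  finally have down: "(real T - 1) * x \<le> real T"
    using T by (auto dest!: power_less_imp_less_base simp: of_nat_diff)
  have "real T * real m = \<alpha> * (real m * x ^ T)"
    using xT by (simp add: algebra_simps)
  also have "\<dots> \<le> \<alpha> * (real T * x ^ m)"
    using mult_power_le_at_peak[OF x T up down assms(2)] assms(1) by simp
  finally have "real T * real m \<le> real T * (\<alpha> * x ^ m)"
    by (simp add: algebra_simps)
  then show ?thesis
    using T by (simp add: x_power)
qed

declare chi.simps [simp del]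

lemma chi_ge_a: "t \<ge> 1 \<Longrightarrow> a t \<le> chi a \<alpha> t"
  by (subst chi.simps) auto

lemma chi_ge_scaled:
  assumes "1 \<le> k" "k < t"
  shows "real (t - k) / \<alpha> * chi a \<alpha> k \<le> chi a \<alpha> t"
proof -
  have "real (t - k) / \<alpha> * chi a \<alpha> k \<le> Max ((\<lambda>k. real (t - k) / \<alpha> * chi a \<alpha> k) ` {1..<t})"
    using assms by (intro Max_ge) auto
  then show ?thesis
    using assms by (subst chi.simps) simp
qed

lemma chi_le:
  assumes "a t \<le> B" "\<And>k. 1 \<le> k \<Longrightarrow> k < t \<Longrightarrow> real (t - k) / \<alpha> * chi a \<alpha> k \<le> B"
  shows "chi a \<alpha> t \<le> B"
  using assms by (subst chi.simps) auto

lemma chi_pos: "(\<And>n. n \<ge> 1 \<Longrightarrow> a n > 0) \<Longrightarrow> t \<ge> 1 \<Longrightarrow> chi a \<alpha> t > 0"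
  using chi_ge_a less_le_trans by blast


lemma chi_exp_lower_bound:
  assumes "\<alpha> > 0" "\<And>n. n \<ge> 1 \<Longrightarrow> a n > 0" "T \<ge> 1" "exp (v * real T) \<le> real T / \<alpha>"
  obtains c' where "c' > 0" "\<And>t. t \<ge> 1 \<Longrightarrow> c' * exp (v * real t) \<le> chi a \<alpha> t"
proof
  define c' where "c' = Min ((\<lambda>t. chi a \<alpha> t / exp (v * real t)) ` {1..T})"
  show "c' > 0"
    unfolding c'_def using assms(3) by (subst Min_gr_iff) (auto intro!: divide_pos_pos chi_pos assms(2))
  show "c' * exp (v * real t) \<le> chi a \<alpha> t" if "t \<ge> 1" for t
    using that
  proof (induction t rule: less_induct)
    case (less t)
    show ?case
    proof (cases "t \<le> T")
      case True
      then have "c' \<le> chi a \<alpha> t / exp (v * real t)"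
        unfolding c'_def using less.prems by (intro Min_le) auto
      then show ?thesis
        by (simp add: pos_le_divide_eq)
    next
      case False
      define k where "k = t - T"
      have k: "1 \<le> k" "k < t" "t - k = T" "t = T + k"
        using False assms(3) by (auto simp: k_def)
      have "c' * exp (v * real t) = exp (v * real T) * (c' * exp (v * real k))"
        using k(4) by (simp add: exp_add[symmetric] algebra_simps)
      also have "\<dots> \<le> real (t - k) / \<alpha> * chi a \<alpha> k"
        using assms(1,4) less.IH[OF k(2,1)] k(3) \<open>c' > 0\<close>
        by (intro mult_mono) auto
      also have "\<dots> \<le> chi a \<alpha> t"
        using k(1,2) by (rule chi_ge_scaled)
      finally show ?thesis .
    qed
  qed
qed

lemma chi_exp_upper_bound:
  assumes "\<alpha> > 0" "\<And>m. m \<ge> 1 \<Longrightarrow> real m \<le> \<alpha> * exp (v * real m)"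
    and "K \<ge> 0" "\<And>n. n \<ge> 1 \<Longrightarrow> a n \<le> K * exp (v * real n)" "t \<ge> 1"
  shows "chi a \<alpha> t \<le> K * exp (v * real t)"
  using assms(5)
proof (induction t rule: less_induct)
  case (less t)
  show ?case
  proof (rule chi_le)
    show "a t \<le> K * exp (v * real t)"
      using assms(4) less.prems .
    fix k assume k: "1 \<le> k" "k < t"
    have "real (t - k) / \<alpha> \<le> exp (v * real (t - k))"
      using assms(1) assms(2)[of "t - k"] k by (simp add: pos_divide_le_eq mult.commute)
    have "real (t - k) / \<alpha> * chi a \<alpha> k \<le> real (t - k) / \<alpha> * (K * exp (v * real k))"
      using less.IH[OF k(2,1)] assms(1) by (intro mult_left_mono) auto
    also have "\<dots> \<le> exp (v * real (t - k)) * (K * exp (v * real k))"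
      using \<open>real (t - k) / \<alpha> \<le> _\<close> assms(3) by (intro mult_right_mono) auto
    also have "\<dots> = K * exp (v * real t)"
      using k by (simp add: exp_add[symmetric] algebra_simps of_nat_diff)
    finally show "real (t - k) / \<alpha> * chi a \<alpha> k \<le> K * exp (v * real t)" .
  qed
qed

lemma ln_div_tendsto_of_exp_bounds:
  fixes f :: "nat \<Rightarrow> real"
  assumes "c' > 0"
    and bounds: "\<And>t. t \<ge> 1 \<Longrightarrow> c' * exp (v * real t) \<le> f t \<and> f t \<le> c * exp (v * real t)"
  shows "(\<lambda>t. ln (f t) / real t) \<longlonglongrightarrow> v"
proof (rule tendsto_sandwich)
  have "c' * exp (v * real 1) \<le> c * exp (v * real 1)"
    using bounds[OF order_refl] by (meson order.trans)
  then have "c > 0"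
    using assms(1) by (smt (verit) exp_gt_zero mult_le_cancel_right)
  have ln_bound: "ln (d * exp (v * real t)) / real t = ln d / real t + v"
    if "d > 0" "t \<ge> 1" for d t
    using that by (simp add: ln_mult add_divide_distrib)
  show "\<forall>\<^sub>F t in sequentially. ln c' / real t + v \<le> ln (f t) / real t"
    using eventually_ge_at_top[of 1]
  proof eventually_elim
    case (elim t)
    have "ln (c' * exp (v * real t)) \<le> ln (f t)"
      using bounds[OF elim] assms(1) by (intro ln_mono) auto
    from divide_right_mono[OF this of_nat_0_le_iff[of t]] show ?case
      using ln_bound[OF assms(1) elim] by simp
  qed
  show "\<forall>\<^sub>F t in sequentially. ln (f t) / real t \<le> ln c / real t + v"
    using eventually_ge_at_top[of 1]
  proof eventually_elim
    case (elim t)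
    have "ln (f t) \<le> ln (c * exp (v * real t))"
      using bounds[OF elim] assms(1)
      by (intro ln_mono) (auto intro: less_le_trans[OF mult_pos_pos[OF assms(1) exp_gt_zero]])
    from divide_right_mono[OF this of_nat_0_le_iff[of t]] show ?case
      using ln_bound[OF \<open>c > 0\<close> elim] by simp
  qed
  show "(\<lambda>t. ln c' / real t + v) \<longlonglongrightarrow> v" "(\<lambda>t. ln c / real t + v) \<longlonglongrightarrow> v"
    using tendsto_add[OF lim_const_over_n tendsto_const] by simp_all
qed

theorem lemma4:
  fixes \<alpha> :: real and a :: "nat \<Rightarrow> real"
  assumes "\<alpha> > 0"
    and "\<And>n. n \<ge> 1 \<Longrightarrow> a n > 0"
    and "((\<lambda>n. a n * exp (- nu \<alpha> * real n)) \<longlongrightarrow> 0) sequentially"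
  shows "(\<exists>c' c. 0 < c' \<and> c' \<le> c \<and>
           (\<forall>t\<ge>1. c' * exp (nu \<alpha> * real t) \<le> chi a \<alpha> t \<and>
                   chi a \<alpha> t \<le> c * exp (nu \<alpha> * real t)))
       \<and> ((\<lambda>t. ln (chi a \<alpha> t) / real t) \<longlongrightarrow> nu \<alpha>) sequentially"
proof -
  have "exp (nu \<alpha> * real (T_of \<alpha>)) \<le> real (T_of \<alpha>) / \<alpha>"
    using exp_nu_T_of[OF assms(1)] assms(1) by (simp add: field_simps)
  with chi_exp_lower_bound[of \<alpha> a, OF assms(1,2) T_of_threshold(1)[OF assms(1)]]
  obtain c' where c': "c' > 0" "\<And>t. t \<ge> 1 \<Longrightarrow> c' * exp (nu \<alpha> * real t) \<le> chi a \<alpha> t"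
    by blast
  obtain K where K: "K > 0" "\<And>n. norm (a n * exp (- nu \<alpha> * real n)) \<le> K"
    using convergent_imp_Bseq[OF convergentI[OF assms(3)]] unfolding Bseq_def by blast
  define c where "c = max K c'"
  have "a n \<le> c * exp (nu \<alpha> * real n)" for n
  proof -
    have "a n * exp (- nu \<alpha> * real n) \<le> c"
      using K(2)[of n] by (simp add: c_def)
    then show ?thesis
      by (simp add: exp_minus field_simps)
  qed
  then have "chi a \<alpha> t \<le> c * exp (nu \<alpha> * real t)" if "t \<ge> 1" for t
    using chi_exp_upper_bound[OF assms(1) le_exp_nu[OF assms(1)]] K(1) that
    by (simp add: c_def)
  with c' have "\<forall>t\<ge>1. c' * exp (nu \<alpha> * real t) \<le> chi a \<alpha> t \<and>
      chi a \<alpha> t \<le> c * exp (nu \<alpha> * real t)"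
    by blast
  moreover have "c' \<le> c"
    by (simp add: c_def)
  ultimately show ?thesis
    using c'(1) ln_div_tendsto_of_exp_bounds[of c' "nu \<alpha>" "chi a \<alpha>" c] by blast
qed

end
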